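(* Let $D_\infty$ be the infinite dihedral group, given by the monoid presentation $\langle a,b\mid a^2=1,\ b^2=1\rangle$. Then: (1) $D_\infty$ belongs to the Mal'cev product $\mathbf{Com}\,ⓜ\,\mathbf{Fin}$. (2) For every $n\ge1$ the Zimin word $Z_n$ is an isoterm relative to $D_\infty$. Consequently, the semigroup identities of $D_\infty$ admit no finite basis.
   Context: The Zimin words are defined by $Z_1=x_1$ and $Z_{n+1}=Z_n\,x_{n+1}\,Z_n$. A word $v$ is an isoterm relative to a semigroup $S$ if the only word $v'$ such that $S$ satisfies $v\approx v'$ is $v'=v$. For classes of semigroups $\mathbf{A},\mathbf{B}$, the Mal'cev product $\mathbf{A}\,ⓜ\,\mathbf{B}$ is the class of all semigroups $S$ admitting a congruence $\theta$ such that $S/\theta\in\mathbf{B}$ and every $\theta$-class that is a subsemigroup of $S$ lies in $\mathbf{A}$. $\mathbf{Com}$ denotes the class of commutative semigroups and $\mathbf{Fin}$ the class of finite semigroups. The identities considered are semigroup identities, i.e. identities $u\approx v$ between nonempty words. *)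

theory Defs
  imports Main
begin

text \<open>Generators: a = True, b = False. Elements of the free monoid are bool lists.
  The defining relations a^2 = 1, b^2 = 1 generate the congruence below.\<close>

inductive dih_step :: "bool list \<Rightarrow> bool list \<Rightarrow> bool" where
  "dih_step (xs @ [c, c] @ ys) (xs @ ys)"

definition dih_cong :: "bool list \<Rightarrow> bool list \<Rightarrow> bool" where
  "dih_cong = equivclp dih_step"

lemma equivp_dih_cong: "equivp dih_cong"
  unfolding dih_cong_def
  by (intro equivpI reflpI sympI transpI) (auto intro: equivclp_sym equivclp_trans)

quotient_type Dinf = "bool list" / dih_cong
  by (rule equivp_dih_cong)

lemma dih_step_app: "dih_step x y \<Longrightarrow> dih_step (z @ x @ w) (z @ y @ w)"
proof (induction rule: dih_step.induct)
  case (1 xs c ys)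
  have "dih_step ((z @ xs) @ [c, c] @ (ys @ w)) ((z @ xs) @ (ys @ w))"
    by (rule dih_step.intros)
  then show ?case by simp
qed

lemma dih_cong_app: "dih_cong x y \<Longrightarrow> dih_cong (z @ x @ w) (z @ y @ w)"
  unfolding dih_cong_def equivclp_def
proof (induction rule: rtranclp_induct)
  case base then show ?case by simp
next
  case (step y u)
  from step.hyps(2) have "symclp dih_step (z @ y @ w) (z @ u @ w)"
    by (auto simp: symclp_def intro: dih_step_app)
  with step.IH show ?case by (rule rtranclp.rtrancl_into_rtrancl)
qed

lemma dih_cong_append:
  "dih_cong x y \<Longrightarrow> dih_cong u v \<Longrightarrow> dih_cong (x @ u) (y @ v)"
proof -
  assume a: "dih_cong x y" "dih_cong u v"
  have "dih_cong ([] @ x @ u) ([] @ y @ u)" by (rule dih_cong_app[OF a(1)])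
  moreover have "dih_cong (y @ u @ []) (y @ v @ [])" by (rule dih_cong_app[OF a(2)])
  ultimately show ?thesis
    using equivp_transp[OF equivp_dih_cong] by fastforce
qed

instantiation Dinf :: monoid_mult
begin
lift_definition one_Dinf :: Dinf is "[]" .
lift_definition times_Dinf :: "Dinf \<Rightarrow> Dinf \<Rightarrow> Dinf" is "(@)"
  by (rule dih_cong_append)
instance
proof
  fix a b c :: Dinf
  show "a * b * c = a * (b * c)" by transfer (simp add: equivp_reflp[OF equivp_dih_cong])
  show "1 * a = a" by transfer (simp add: equivp_reflp[OF equivp_dih_cong])
  show "a * 1 = a" by transfer (simp add: equivp_reflp[OF equivp_dih_cong])
qed
end

fun word_eval :: "(nat \<Rightarrow> 'a::semigroup_mult) \<Rightarrow> nat list \<Rightarrow> 'a" where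
  "word_eval \<phi> [] = undefined"
| "word_eval \<phi> [x] = \<phi> x"
| "word_eval \<phi> (x # y # ys) = \<phi> x * word_eval \<phi> (y # ys)"

definition satisfies_id :: "'a::semigroup_mult itself \<Rightarrow> nat list \<Rightarrow> nat list \<Rightarrow> bool" where
  "satisfies_id _ u v \<longleftrightarrow> u \<noteq> [] \<and> v \<noteq> [] \<and> (\<forall>\<phi> :: nat \<Rightarrow> 'a. word_eval \<phi> u = word_eval \<phi> v)"

definition isoterm :: "'a::semigroup_mult itself \<Rightarrow> nat list \<Rightarrow> bool" where
  "isoterm T v \<longleftrightarrow> (\<forall>v'. satisfies_id T v v' \<longrightarrow> v' = v)"

fun zimin :: "nat \<Rightarrow> nat list" where
  "zimin 0 = []"
| "zimin (Suc n) = zimin n @ [n] @ zimin n"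

definition subst_word :: "(nat \<Rightarrow> nat list) \<Rightarrow> nat list \<Rightarrow> nat list" where
  "subst_word \<sigma> w = concat (map \<sigma> w)"

inductive derivable :: "(nat list \<times> nat list) set \<Rightarrow> nat list \<Rightarrow> nat list \<Rightarrow> bool"
  for \<Sigma> where
  ax: "(u, v) \<in> \<Sigma> \<Longrightarrow> derivable \<Sigma> u v"
| refl: "derivable \<Sigma> u u"
| sym: "derivable \<Sigma> u v \<Longrightarrow> derivable \<Sigma> v u"
| trans: "derivable \<Sigma> u v \<Longrightarrow> derivable \<Sigma> v w \<Longrightarrow> derivable \<Sigma> u w"
| subst: "derivable \<Sigma> u v \<Longrightarrow> (\<forall>x. \<sigma> x \<noteq> []) \<Longrightarrow>
            derivable \<Sigma> (subst_word \<sigma> u) (subst_word \<sigma> v)"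
| mult: "derivable \<Sigma> u v \<Longrightarrow> derivable \<Sigma> (p @ u @ q) (p @ v @ q)"

definition finitely_based :: "'a::semigroup_mult itself \<Rightarrow> bool" where
  "finitely_based T \<longleftrightarrow> (\<exists>\<Sigma>. finite \<Sigma> \<and> (\<forall>(u, v) \<in> \<Sigma>. satisfies_id T u v) \<and>
      (\<forall>u v. satisfies_id T u v \<longrightarrow> derivable \<Sigma> u v))"

definition in_Com_malcev_Fin :: "'a::semigroup_mult itself \<Rightarrow> bool" where
  "in_Com_malcev_Fin _ \<longleftrightarrow> (\<exists>\<theta> :: ('a \<times> 'a) set.
      equiv UNIV \<theta> \<and>
      (\<forall>x y z. (x, y) \<in> \<theta> \<longrightarrow> (x * z, y * z) \<in> \<theta> \<and> (z * x, z * y) \<in> \<theta>) \<and>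
      finite (UNIV // \<theta>) \<and>
      (\<forall>C \<in> UNIV // \<theta>. (\<forall>x\<in>C. \<forall>y\<in>C. x * y \<in> C) \<longrightarrow> (\<forall>x\<in>C. \<forall>y\<in>C. x * y = y * x)))"

end

theory Submission
  imports Defs
begin

text \<open>\<open>D\<^sub>\<infinity>\<close> acts faithfully on \<open>\<int>\<close> by the affine maps \<open>x \<mapsto> k \<plusminus> x\<close>. The sign of
  such a map is a homomorphism onto \<open>\<int>/2\<close>; its even class consists of the commuting
  translations, and its odd class is not closed under products, which gives membership in
  the Mal'cev product of \<open>Com\<close> and \<open>Fin\<close>.

  Evaluating a word at the elements \<open>z \<mapsto> (\<delta>\<^sub>z\<^sub>y, z \<in> E)\<close> and summing over all \<open>E \<subseteq> V\<close>
  with character weights (Fourier inversion on \<open>(\<int>/2)\<^sup>V\<close>) shows that an identity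
  \<open>u \<approx> v\<close> of \<open>D\<^sub>\<infinity>\<close> preserves, for each letter \<open>y\<close> and each parity vector \<open>c\<close>, the
  number of occurrences of \<open>y\<close> whose preceding prefix has parity vector \<open>c\<close>. When the
  prefixes of \<open>u\<close> have pairwise distinct parity vectors, as for the Zimin words, this forces
  \<open>v = u\<close>.

  For non-finite basedness, let \<open>B\<^sub>b = x\<^sub>1\<dots>x\<^sub>N y\<^sub>1\<dots>y\<^sub>N x\<^sub>N\<dots>x\<^sub>1 y\<^sub>N\<dots>y\<^sub>1\<close> on
  letters starting at \<open>b\<close>. Both blocks of \<open>W = B\<^sub>0 B\<^sub>2\<^sub>N\<close> evaluate to translations, so
  \<open>W \<approx> B\<^sub>2\<^sub>N B\<^sub>0\<close> holds in \<open>D\<^sub>\<infinity>\<close>. In \<open>W\<close> equal letters are more than \<open>N\<close> apart and no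
  two-letter factor occurs twice; hence an instance of the left side \<open>u\<close> of an identity with
  \<open>|u| \<le> N\<close> inside \<open>W\<close> forces distinct prefix parity vectors in \<open>u\<close>, so the identity acts
  trivially on \<open>W\<close>, and a finite basis could never derive \<open>W \<approx> B\<^sub>2\<^sub>N B\<^sub>0\<close>.\<close>

section \<open>The affine model of \<open>D\<^sub>\<infinity>\<close>\<close>

text \<open>The pair \<open>Aff k e\<close> stands for the affine map \<open>x \<mapsto> k + (-1)^e x\<close> of \<open>\<int>\<close>;
  the generators \<open>a, b\<close> become the reflections \<open>x \<mapsto> -x\<close> and \<open>x \<mapsto> 1 - x\<close>.\<close>

datatype aff = Aff (shift: int) (flip: bool)

instantiation aff :: monoid_mult
begin
definition one_aff :: aff where "1 = Aff 0 False"
definition times_aff :: "aff \<Rightarrow> aff \<Rightarrow> aff" where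
  "x * y = Aff (shift x + (if flip x then - shift y else shift y)) (flip x \<noteq> flip y)"
instance
  by standard (auto simp: one_aff_def times_aff_def intro: aff.expand)
end

lemma flip_mult [simp]: "flip (x * y) \<longleftrightarrow> flip x \<noteq> flip y"
  and shift_mult [simp]: "shift (x * y) = shift x + (if flip x then - shift y else shift y)"
  and flip_one [simp]: "\<not> flip 1"
  and shift_one [simp]: "shift 1 = 0"
  by (simp_all add: times_aff_def one_aff_def)

lemma aff_eqI: "shift x = shift y \<Longrightarrow> flip x = flip y \<Longrightarrow> x = y"
  by (cases x; cases y) simp

lemma translations_commute: "\<not> flip x \<Longrightarrow> \<not> flip y \<Longrightarrow> x * y = y * x"
  by (rule aff_eqI) simp_all

definition aff_gen :: "bool \<Rightarrow> aff" where
  "aff_gen c = Aff (if c then 0 else 1) True"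

definition aff_of_word :: "bool list \<Rightarrow> aff" where
  "aff_of_word cs = prod_list (map aff_gen cs)"

lemma aff_gen_square: "aff_gen c * aff_gen c = 1"
  by (rule aff_eqI) (simp_all add: aff_gen_def)

lemma aff_of_word_append: "aff_of_word (xs @ ys) = aff_of_word xs * aff_of_word ys"
  by (simp add: aff_of_word_def)

lemma aff_of_word_dih_step: "dih_step xs ys \<Longrightarrow> aff_of_word xs = aff_of_word ys"
  by (induction rule: dih_step.induct)
    (simp add: aff_of_word_def mult.assoc[symmetric] aff_gen_square)

lemma aff_of_word_dih_cong: "dih_cong xs ys \<Longrightarrow> aff_of_word xs = aff_of_word ys"
  unfolding dih_cong_def equivclp_def
  by (induction rule: rtranclp_induct) (auto simp: symclp_def dest: aff_of_word_dih_step)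

lift_definition aff_of :: "Dinf \<Rightarrow> aff" is aff_of_word
  by (rule aff_of_word_dih_cong)

lemma aff_of_mult: "aff_of (x * y) = aff_of x * aff_of y"
  by transfer (rule aff_of_word_append)

lemma aff_of_one: "aff_of 1 = 1"
  by transfer (simp add: aff_of_word_def)

lemma aff_of_prod_list: "aff_of (prod_list xs) = prod_list (map aff_of xs)"
  by (induction xs) (simp_all add: aff_of_one aff_of_mult)

fun alternating :: "bool \<Rightarrow> nat \<Rightarrow> bool list" where
  "alternating c 0 = []"
| "alternating c (Suc n) = c # alternating (\<not> c) n"

lemma aff_of_alternating:
  "aff_of_word (alternating c n) =
     Aff (if c then - int (n div 2) else int ((n + 1) div 2)) (odd n)"
proof (induction n arbitrary: c)
  case 0
  then show ?case by (simp add: aff_of_word_def one_aff_def)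
next
  case (Suc n)
  then show ?case
    by (cases c) (auto simp: aff_of_word_def aff_gen_def times_aff_def elim: oddE)
qed

lemma dih_cong_alternating: "\<exists>c n. dih_cong xs (alternating c n)"
proof (induction xs)
  case Nil
  have "dih_cong [] (alternating True 0)"
    by (simp add: equivp_reflp[OF equivp_dih_cong])
  then show ?case by blast
next
  case (Cons c xs)
  then obtain d n where xs: "dih_cong xs (alternating d n)" by blast
  have cxs: "dih_cong (c # xs) (c # alternating d n)"
    using dih_cong_app[OF xs, of "[c]" "[]"] by simp
  have "\<exists>e m. dih_cong (c # alternating d n) (alternating e m)"
  proof (cases "n = 0 \<or> d \<noteq> c")
    case True
    then have "c # alternating d n = alternating c (Suc n)"
      by (cases n) auto
    then show ?thesis by (metis equivp_reflp[OF equivp_dih_cong])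
  next
    case False
    then obtain m where "n = Suc m" "d = c" by (cases n) auto
    moreover have "dih_step ([] @ [c, c] @ alternating (\<not> c) m) ([] @ alternating (\<not> c) m)"
      by (rule dih_step.intros)
    ultimately have "dih_cong (c # alternating d n) (alternating (\<not> c) m)"
      unfolding dih_cong_def equivclp_def by (auto simp: symclp_def)
    then show ?thesis by blast
  qed
  with cxs show ?case
    using equivp_transp[OF equivp_dih_cong] by blast
qed

lemma aff_of_word_alternating_inj:
  assumes "aff_of_word (alternating c n) = aff_of_word (alternating d m)"
  shows "alternating c n = alternating d m"
proof -
  from assms have "(n = 0 \<and> m = 0) \<or> (c = d \<and> n = m)"
    unfolding aff_of_alternating
    by (cases c; cases d; auto elim!: evenE oddE; presburger)
  then show ?thesis by auto
qed

lemma aff_of_inj: "inj aff_of"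
proof (rule injI, transfer)
  fix xs ys
  assume eq: "aff_of_word xs = aff_of_word ys"
  obtain c n d m where xs: "dih_cong xs (alternating c n)" and ys: "dih_cong ys (alternating d m)"
    using dih_cong_alternating by meson
  have "alternating c n = alternating d m"
    using eq aff_of_word_dih_cong[OF xs] aff_of_word_dih_cong[OF ys]
    by (metis aff_of_word_alternating_inj)
  then show "dih_cong xs ys"
    using xs ys equivp_symp[OF equivp_dih_cong] equivp_transp[OF equivp_dih_cong] by metis
qed

lemma aff_of_surj: "surj aff_of"
proof -
  have "\<exists>c n. aff_of_word (alternating c n) = Aff k e" for k e
  proof (cases "k \<le> 0")
    case True
    then show ?thesis
      by (intro exI[of _ True] exI[of _ "2 * nat (- k) + (if e then 1 else 0)"])
        (simp add: aff_of_alternating del: alternating.simps)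
  next
    case False
    then show ?thesis
      by (intro exI[of _ False] exI[of _ "2 * nat k - (if e then 1 else 0)"])
        (auto simp: aff_of_alternating simp del: alternating.simps)
  qed
  then have "\<exists>cs. aff_of_word cs = x" for x
    by (cases x) blast
  then have "\<exists>d. aff_of d = x" for x
    by (metis aff_of.abs_eq)
  then show ?thesis by (metis surjI)
qed

lemma word_eval_eq_prod_list: "w \<noteq> [] \<Longrightarrow> word_eval \<phi> w = prod_list (map \<phi> w)"
  by (induction \<phi> w rule: word_eval.induct) simp_all

lemma satisfies_id_Dinf_iff:
  "satisfies_id TYPE(Dinf) u v \<longleftrightarrow>
     u \<noteq> [] \<and> v \<noteq> [] \<and> (\<forall>g :: nat \<Rightarrow> aff. prod_list (map g u) = prod_list (map g v))"
proof -
  have eval: "aff_of (word_eval \<phi> w) = prod_list (map (aff_of \<circ> \<phi>) w)" if "w \<noteq> []" for \<phi> w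
    using that by (simp add: word_eval_eq_prod_list aff_of_prod_list)
  have "(\<forall>\<phi> :: nat \<Rightarrow> Dinf. word_eval \<phi> u = word_eval \<phi> v) \<longleftrightarrow>
        (\<forall>g :: nat \<Rightarrow> aff. prod_list (map g u) = prod_list (map g v))"
    if "u \<noteq> []" "v \<noteq> []"
  proof
    assume eq: "\<forall>\<phi> :: nat \<Rightarrow> Dinf. word_eval \<phi> u = word_eval \<phi> v"
    show "\<forall>g :: nat \<Rightarrow> aff. prod_list (map g u) = prod_list (map g v)"
    proof
      fix g :: "nat \<Rightarrow> aff"
      have "aff_of \<circ> (inv aff_of \<circ> g) = g"
        using aff_of_surj by (simp add: fun_eq_iff surj_f_inv_f)
      then show "prod_list (map g u) = prod_list (map g v)"
        using eval[OF that(1), of "inv aff_of \<circ> g"] eval[OF that(2), of "inv aff_of \<circ> g"] eq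
        by simp
    qed
  next
    assume "\<forall>g :: nat \<Rightarrow> aff. prod_list (map g u) = prod_list (map g v)"
    then have "aff_of (word_eval \<phi> u) = aff_of (word_eval \<phi> v)" for \<phi>
      using eval that by simp
    then show "\<forall>\<phi> :: nat \<Rightarrow> Dinf. word_eval \<phi> u = word_eval \<phi> v"
      using aff_of_inj by (simp add: injD)
  qed
  then show ?thesis
    unfolding satisfies_id_def by blast
qed

lemma Dinf_in_Com_malcev_Fin: "in_Com_malcev_Fin TYPE(Dinf)"
proof -
  define \<theta> :: "(Dinf \<times> Dinf) set" where "\<theta> = {(x, y). flip (aff_of x) = flip (aff_of y)}"
  obtain r where r: "aff_of r = Aff 0 True"
    using aff_of_surj by (metis surj_f_inv_f)
  have "\<exists>x. flip (aff_of x) = e" for e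
    using aff_of_surj by (metis aff.sel(2) surj_f_inv_f)
  then have "UNIV // \<theta> = (\<lambda>e. {x. flip (aff_of x) = e}) ` UNIV"
    unfolding \<theta>_def quotient_def by auto
  then have classes: "UNIV // \<theta> = {{x. \<not> flip (aff_of x)}, {x. flip (aff_of x)}}"
    by (auto simp: UNIV_bool)
  have "\<forall>x\<in>C. \<forall>y\<in>C. x * y = y * x" if "C \<in> UNIV // \<theta>" and closed: "\<forall>x\<in>C. \<forall>y\<in>C. x * y \<in> C" for C
  proof -
    have "C \<noteq> {x. flip (aff_of x)}"
      using closed[rule_format, of r r] by (auto simp: r aff_of_mult)
    then have "C = {x. \<not> flip (aff_of x)}"
      using that(1) classes by blast
    then show ?thesis
      using aff_of_inj by (auto simp: aff_of_mult translations_commute injD)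
  qed
  moreover have "equiv UNIV \<theta>"
    unfolding \<theta>_def by (auto intro!: equivI refl_onI symI transI)
  moreover have "(x, y) \<in> \<theta> \<Longrightarrow> (x * z, y * z) \<in> \<theta> \<and> (z * x, z * y) \<in> \<theta>" for x y z
    unfolding \<theta>_def by (simp add: aff_of_mult)
  ultimately show ?thesis
    unfolding in_Com_malcev_Fin_def by (intro exI[of _ \<theta>]) (simp add: classes)
qed

section \<open>Parity vectors of prefixes\<close>

definition parity :: "nat list \<Rightarrow> nat \<Rightarrow> bool" where
  "parity w z \<longleftrightarrow> odd (count_list w z)"

lemma parity_append: "parity (xs @ ys) z \<longleftrightarrow> parity xs z \<noteq> parity ys z"
  by (simp add: parity_def)

lemma parity_append_cancel: "parity (p @ xs) = parity (p @ ys) \<longleftrightarrow> parity xs = parity ys"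
  by (auto simp: fun_eq_iff parity_append)

lemma parity_notin: "z \<notin> set w \<Longrightarrow> \<not> parity w z"
  by (simp add: parity_def)

lemma length_filter_mem_eq_sum_count:
  "finite E \<Longrightarrow> length (filter (\<lambda>z. z \<in> E) w) = (\<Sum>z\<in>E. count_list w z)"
proof (induction w)
  case (Cons a w)
  have "(\<Sum>z\<in>E. count_list (a # w) z) = (\<Sum>z\<in>E. (if a = z then 1 else 0) + count_list w z)"
    by (rule sum.cong) auto
  also have "\<dots> = (if a \<in> E then 1 else 0) + (\<Sum>z\<in>E. count_list w z)"
    using Cons.prems by (simp add: sum.distrib)
  finally show ?case
    using Cons by simp
qed simp

lemma flip_prod_list: "flip (prod_list (map g w)) \<longleftrightarrow> odd (length (filter (flip \<circ> g) w))"
  by (induction w) auto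

lemma shift_prod_list:
  "shift (prod_list (map g w)) =
     (\<Sum>j<length w. (if flip (prod_list (map g (take j w))) then -1 else 1) * shift (g (w ! j)))"
proof (induction w rule: rev_induct)
  case (snoc a w)
  have "(\<Sum>j<length (w @ [a]). (if flip (prod_list (map g (take j (w @ [a])))) then -1 else 1) * shift (g ((w @ [a]) ! j)))
     = (\<Sum>j<length w. (if flip (prod_list (map g (take j w))) then -1 else 1) * shift (g (w ! j)))
       + (if flip (prod_list (map g w)) then -1 else 1) * shift (g a)"
    by (simp add: nth_append)
  then show ?case
    using snoc by simp
qed simp

text \<open>Evaluating at \<open>probe E y\<close> counts the occurrences of \<open>y\<close>, each signed by the parity of
  the number of letters from \<open>E\<close> preceding it.\<close>

definition probe :: "nat set \<Rightarrow> nat \<Rightarrow> nat \<Rightarrow> aff" where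
  "probe E y z = Aff (if z = y then 1 else 0) (z \<in> E)"

lemma shift_prod_probe:
  assumes "finite E"
  shows "shift (prod_list (map (probe E y) w)) =
    (\<Sum>j<length w. if w ! j = y then (\<Prod>z\<in>E. (-1) ^ count_list (take j w) z) else 0)"
proof -
  have "(if flip (prod_list (map (probe E y) p)) then -1 else 1) = (\<Prod>z\<in>E. (-1::int) ^ count_list p z)" for p
  proof -
    have "flip (prod_list (map (probe E y) p)) \<longleftrightarrow> odd (\<Sum>z\<in>E. count_list p z)"
      using length_filter_mem_eq_sum_count[OF assms, of p]
      by (simp add: flip_prod_list probe_def comp_def)
    then show ?thesis
      by (simp add: power_sum[symmetric])
  qed
  then show ?thesis
    by (simp add: shift_prod_list) (auto simp: probe_def intro!: sum.cong)
qed

lemma character_sum: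
  assumes "finite V"
  shows "(\<Sum>E\<in>Pow V. \<Prod>z\<in>E. (if c z then -1 else 1) * (-1::int) ^ count_list p z)
       = (if \<forall>z\<in>V. c z = parity p z then 2 ^ card V else 0)"
proof -
  have "(\<Sum>E\<in>Pow V. \<Prod>z\<in>E. (if c z then -1 else 1) * (-1::int) ^ count_list p z)
      = (\<Prod>z\<in>V. (if c z then -1 else 1) * (-1) ^ count_list p z + 1)"
    using prod_add[OF assms, of "\<lambda>z. (if c z then -1 else 1) * (-1::int) ^ count_list p z" "\<lambda>_. 1"]
    by simp
  also have "\<dots> = (\<Prod>z\<in>V. if c z = parity p z then 2 else 0)"
    by (rule prod.cong) (auto simp: parity_def)
  also have "\<dots> = (if \<forall>z\<in>V. c z = parity p z then 2 ^ card V else 0)"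
    using assms by auto
  finally show ?thesis .
qed

lemma probe_character_sum:
  assumes "finite V"
  shows "(\<Sum>E\<in>Pow V. (\<Prod>z\<in>E. if c z then -1 else 1) * shift (prod_list (map (probe E y) w)))
       = 2 ^ card V * int (card {j. j < length w \<and> w ! j = y \<and> (\<forall>z\<in>V. c z = parity (take j w) z)})"
  (is "?lhs = _ * int (card {j. j < length w \<and> ?P j})")
proof -
  have fin: "E \<in> Pow V \<Longrightarrow> finite E" for E
    using assms finite_subset by auto
  have "?lhs = (\<Sum>E\<in>Pow V. \<Sum>j<length w.
      if w ! j = y then (\<Prod>z\<in>E. (if c z then -1 else 1) * (-1) ^ count_list (take j w) z) else 0)"
    by (rule sum.cong[OF HOL.refl])
      (auto simp: shift_prod_probe fin sum_distrib_left prod.distrib intro!: sum.cong)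
  also have "\<dots> = (\<Sum>j<length w. if w ! j = y then
      (\<Sum>E\<in>Pow V. \<Prod>z\<in>E. (if c z then -1 else 1) * (-1) ^ count_list (take j w) z) else 0)"
    by (subst sum.swap) (auto intro!: sum.cong)
  also have "\<dots> = (\<Sum>j<length w. if ?P j then 2 ^ card V else 0)"
    by (rule sum.cong[OF HOL.refl]) (simp only: character_sum[OF assms], simp)
  also have "\<dots> = 2 ^ card V * int (card {j. j < length w \<and> ?P j})"
    by (simp add: sum.If_cases lessThan_def Collect_conj_eq Int_commute)
  finally show ?thesis .
qed

lemma prefix_class_card_invariant:
  assumes id: "\<forall>g :: nat \<Rightarrow> aff. prod_list (map g u) = prod_list (map g v)" and "finite V"
  shows "card {j. j < length u \<and> u ! j = y \<and> (\<forall>z\<in>V. c z = parity (take j u) z)}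
       = card {j. j < length v \<and> v ! j = y \<and> (\<forall>z\<in>V. c z = parity (take j v) z)}"
  using probe_character_sum[OF \<open>finite V\<close>, of c y u] probe_character_sum[OF \<open>finite V\<close>, of c y v] id
  by simp

lemma length_eq_if_identity:
  assumes "\<forall>g :: nat \<Rightarrow> aff. prod_list (map g u) = prod_list (map g v)"
  shows "length v = length u"
proof -
  have "shift (prod_list (map (\<lambda>_. Aff 1 False) w)) = int (length w)" for w :: "nat list"
    by (induction w) simp_all
  then have "int (length u) = int (length v)"
    using assms[rule_format, of "\<lambda>_. Aff 1 False"] by metis
  then show ?thesis
    by simp
qed

text \<open>The counts of \<open>prefix_class_card_invariant\<close> reconstruct \<open>u\<close> letter by letter.\<close>

lemma isoterm_Dinf_if_inj_prefix_parity:
  assumes inj: "inj_on (\<lambda>i. parity (take i u)) {..<length u}"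
  shows "isoterm TYPE(Dinf) u"
  unfolding isoterm_def
proof (intro allI impI)
  fix v
  assume "satisfies_id TYPE(Dinf) u v"
  then have id: "\<forall>g :: nat \<Rightarrow> aff. prod_list (map g u) = prod_list (map g v)"
    by (simp add: satisfies_id_Dinf_iff)
  have len: "length v = length u"
    using length_eq_if_identity[OF id] .
  have "take i v = take i u" if "i \<le> length u" for i
    using that
  proof (induction i)
    case (Suc i)
    then have IH: "take i v = take i u" and i: "i < length u"
      by simp_all
    let ?cls = "\<lambda>w. {j. j < length w \<and> w ! j = v ! i \<and> (\<forall>z\<in>set u. parity (take i u) z = parity (take j w) z)}"
    have "i \<in> ?cls v"
      using i len IH by simp
    then have "card (?cls v) > 0"
      by (auto simp: card_gt_0_iff)
    then have "card (?cls u) > 0"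
      using prefix_class_card_invariant[OF id, of "set u" "v ! i" "parity (take i u)"] by simp
    then obtain j where j: "j < length u" "u ! j = v ! i"
      and agree: "\<forall>z\<in>set u. parity (take i u) z = parity (take j u) z"
      by (auto simp: card_gt_0_iff)
    have "parity (take i u) = parity (take j u)"
    proof
      fix z
      show "parity (take i u) z = parity (take j u) z"
      proof (cases "z \<in> set u")
        case False
        then have "z \<notin> set (take k u)" for k
          by (meson in_set_takeD)
        then show ?thesis
          by (simp add: parity_notin)
      qed (use agree in blast)
    qed
    then have "j = i"
      using inj i j(1) by (auto dest: inj_onD)
    then show ?case
      using IH i j len by (simp add: take_Suc_conv_app_nth)
  qed simp
  then show "v = u"
    using len by (metis order_refl take_all)
qed

lemma set_zimin: "set (zimin n) \<subseteq> {..<n}"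
  by (induction n) auto

lemma prefix_parities_distinct_doubling:
  assumes x: "x \<notin> set w"
    and distinct_w: "\<And>i j. i < j \<Longrightarrow> j \<le> length w \<Longrightarrow> parity (take i w) \<noteq> parity (take j w)"
    and ij: "i < j" "j \<le> length (w @ x # w)"
  shows "parity (take i (w @ x # w)) \<noteq> parity (take j (w @ x # w))"
proof -
  have left: "take k (w @ x # w) = take k w" if "k \<le> length w" for k
    using that by simp
  have right: "take k (w @ x # w) = (w @ [x]) @ take (k - Suc (length w)) w" if "length w < k" for k
    using that by simp (metis Suc_diff_Suc take_Suc_Cons)
  have notin: "x \<notin> set (take k w)" for k
    using x by (meson in_set_takeD)
  have parity_x: "parity (take k (w @ x # w)) x \<longleftrightarrow> length w < k" for k
    using x left right notin by (cases "length w < k") (auto simp: parity_append parity_notin parity_def)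
  consider "j \<le> length w" | "i \<le> length w" "length w < j" | "length w < i"
    using ij by linarith
  then show ?thesis
  proof cases
    case 1
    then show ?thesis
      using distinct_w ij left by simp
  next
    case 2
    then show ?thesis
      using parity_x[of i] parity_x[of j] by auto
  next
    case 3
    have j: "length w < j"
      using 3 ij by simp
    have "parity (take (i - Suc (length w)) w) \<noteq> parity (take (j - Suc (length w)) w)"
      using distinct_w 3 ij by simp
    then show ?thesis
      unfolding right[OF 3] right[OF j] parity_append_cancel .
  qed
qed

lemma zimin_prefix_parities_distinct:
  "i < j \<Longrightarrow> j \<le> length (zimin n) \<Longrightarrow> parity (take i (zimin n)) \<noteq> parity (take j (zimin n))"
proof (induction n arbitrary: i j)
  case (Suc n)
  have "n \<notin> set (zimin n)"
    using set_zimin[of n] by auto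
  then show ?case
    using prefix_parities_distinct_doubling[of n "zimin n" i j] Suc by simp
qed simp

lemma isoterm_Dinf_zimin: "isoterm TYPE(Dinf) (zimin n)"
  by (rule isoterm_Dinf_if_inj_prefix_parity, rule linorder_inj_onI')
    (simp add: zimin_prefix_parities_distinct)

section \<open>Words that admit no short nontrivial rewriting\<close>

lemma subst_word_append [simp]: "subst_word \<sigma> (xs @ ys) = subst_word \<sigma> xs @ subst_word \<sigma> ys"
  by (simp add: subst_word_def)

lemma subst_word_subst_word: "subst_word \<sigma> (subst_word \<tau> u) = subst_word (\<lambda>x. subst_word \<sigma> (\<tau> x)) u"
  by (induction u) (simp_all add: subst_word_def)

lemma subst_word_singleton [simp]: "subst_word (\<lambda>x. [x]) u = u"
  by (induction u) (simp_all add: subst_word_def)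

lemma subst_word_eq_Nil_iff: "\<forall>x. \<sigma> x \<noteq> [] \<Longrightarrow> subst_word \<sigma> u = [] \<longleftrightarrow> u = []"
  by (cases u) (simp_all add: subst_word_def)

lemma length_subst_word: "length (subst_word \<sigma> u) = (\<Sum>x\<leftarrow>u. length (\<sigma> x))"
  by (induction u) (simp_all add: subst_word_def)

lemma count_list_subst_word:
  "count_list (subst_word \<sigma> u) z = (\<Sum>x\<in>set u. count_list u x * count_list (\<sigma> x) z)"
proof -
  have "count_list (subst_word \<sigma> u) z = (\<Sum>x\<leftarrow>u. count_list (\<sigma> x) z)"
    by (induction u) (simp_all add: subst_word_def)
  then show ?thesis
    by (simp add: sum_list_map_eq_sum_count)
qed

lemma derivable_fixes_word:
  assumes ax: "\<And>a b \<sigma> p q. (a, b) \<in> \<Sigma> \<Longrightarrow> \<forall>x. \<sigma> x \<noteq> [] \<Longrightarrow>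
      p @ subst_word \<sigma> a @ q = W \<longleftrightarrow> p @ subst_word \<sigma> b @ q = W"
  shows "derivable \<Sigma> u v \<Longrightarrow> \<forall>x. \<sigma> x \<noteq> [] \<Longrightarrow>
      p @ subst_word \<sigma> u @ q = W \<longleftrightarrow> p @ subst_word \<sigma> v @ q = W"
proof (induction arbitrary: \<sigma> p q rule: derivable.induct)
  case (subst u v \<tau>)
  have "\<forall>x. subst_word \<sigma> (\<tau> x) \<noteq> []"
    using subst.prems subst.hyps(2) subst_word_eq_Nil_iff by blast
  then show ?case
    unfolding subst_word_subst_word by (rule subst.IH)
next
  case (mult u v p' q')
  show ?case
    using mult.IH[OF mult.prems, of "p @ subst_word \<sigma> p'" "subst_word \<sigma> q' @ q"] by simp
qed (simp_all add: ax)

definition letters_apart :: "nat \<Rightarrow> 'a list \<Rightarrow> bool" where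
  "letters_apart N w \<longleftrightarrow> (\<forall>s t. s < t \<longrightarrow> t < length w \<longrightarrow> w ! s = w ! t \<longrightarrow> s + N < t)"

lemma letters_apart_factor:
  assumes "letters_apart N (xs @ w @ ys)"
  shows "letters_apart N w"
  unfolding letters_apart_def
proof (intro allI impI)
  fix s t
  assume "s < t" "t < length w" "w ! s = w ! t"
  then show "s + N < t"
    using assms[unfolded letters_apart_def, rule_format, of "length xs + s" "length xs + t"]
    by (simp add: nth_append)
qed

lemma length_even_word_if_letters_apart:
  assumes apart: "letters_apart N w" and "w \<noteq> []" and even: "\<forall>z. even (count_list w z)"
  shows "N + 2 \<le> length w"
proof -
  obtain c w' where w: "w = c # w'"
    using \<open>w \<noteq> []\<close> by (cases w) auto
  have "count_list w' c \<noteq> 0"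
    using even[rule_format, of c] w by (auto intro: odd_pos)
  then obtain t where t: "t < length w'" "w' ! t = c"
    by (metis count_list_0_iff in_set_conv_nth)
  have "0 + N < Suc t"
    using apart[unfolded letters_apart_def, rule_format, of 0 "Suc t"] t w by simp
  then show ?thesis
    using t w by simp
qed

lemma repeated_factor_length_le_1:
  assumes pairs_distinct: "distinct (zip W (tl W))" and W: "W = xs @ s @ ys @ s @ zs"
  shows "length s \<le> 1"
proof (rule ccontr)
  assume "\<not> length s \<le> 1"
  then have "Suc (Suc 0) \<le> length s"
    by simp
  then obtain a b s' where s: "s = a # b # s'"
    by (auto simp: Suc_le_length_iff)
  define i j where "i = length xs" and "j = length xs + length s + length ys"
  have pairs: "zip W (tl W) ! i = (a, b)" "zip W (tl W) ! j = (a, b)"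
    unfolding W s i_def j_def by (simp_all add: nth_append nth_tl)
  have "i < j" "j < length (zip W (tl W))"
    unfolding W s i_def j_def by simp_all
  then show False
    using nth_eq_iff_index_eq[OF pairs_distinct, of i j] pairs by simp
qed

lemma length_subst_word_le_if_letters_repeated:
  assumes pairs_distinct: "distinct (zip W (tl W))" and W: "p @ subst_word \<sigma> u @ q = W"
    and repeated: "\<forall>x\<in>set u. 2 \<le> count_list u x"
  shows "length (subst_word \<sigma> u) \<le> length u"
proof -
  have "length (\<sigma> x) \<le> 1" if "x \<in> set u" for x
  proof -
    obtain u1 u' where "u = u1 @ x # u'" "x \<notin> set u1"
      using \<open>x \<in> set u\<close> by (meson split_list_first)
    moreover have "x \<in> set u'"
    proof -
      have "count_list u x = Suc (count_list u' x)"
        using calculation by simp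
      then have "count_list u' x \<noteq> 0"
        using repeated that by fastforce
      then show ?thesis
        by (simp add: count_list_0_iff)
    qed
    then obtain u2 u3 where "u' = u2 @ x # u3"
      by (meson split_list)
    ultimately have "W = (p @ subst_word \<sigma> u1) @ \<sigma> x @ subst_word \<sigma> u2 @ \<sigma> x @ (subst_word \<sigma> u3 @ q)"
      using W by (simp add: subst_word_def)
    then show ?thesis
      by (rule repeated_factor_length_le_1[OF pairs_distinct])
  qed
  then have "(\<Sum>x\<leftarrow>u. length (\<sigma> x)) \<le> (\<Sum>x\<leftarrow>u. 1)"
    by (intro sum_list_mono) simp
  then show ?thesis
    by (simp add: length_subst_word sum_list_triv)
qed

text \<open>Otherwise the factor between two prefixes with equal parity vectors is a nonempty word
  with only even letter counts. Its instance is long by \<open>letters_apart\<close>, but short, because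
  every letter of the factor occurs twice and therefore has a one-letter image.\<close>

lemma inj_prefix_parity_if_instance:
  assumes apart: "letters_apart N W" and pairs_distinct: "distinct (zip W (tl W))"
    and "length u \<le> N" and \<sigma>: "\<forall>x. \<sigma> x \<noteq> []" and W: "p @ subst_word \<sigma> u @ q = W"
  shows "inj_on (\<lambda>i. parity (take i u)) {..<length u}"
proof (rule linorder_inj_onI', rule notI)
  fix i j
  assume "i \<in> {..<length u}" "j \<in> {..<length u}" "i < j"
    and same: "parity (take i u) = parity (take j u)"
  define d where "d = drop i (take j u)"
  have take_j: "take j u = take i u @ d"
    unfolding d_def using \<open>i < j\<close> by (metis append_take_drop_id less_imp_le_nat min.absorb1 take_take)
  have u: "u = take i u @ d @ drop j u"
    using take_j by (metis append.assoc append_take_drop_id)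
  have "d \<noteq> []" "length d \<le> N"
    unfolding d_def using \<open>i < j\<close> \<open>j \<in> {..<length u}\<close> \<open>length u \<le> N\<close> by auto
  have even: "even (count_list d z)" for z
  proof -
    have "\<not> parity d z"
      using same[THEN fun_cong, of z] by (auto simp: take_j parity_append)
    then show ?thesis
      by (simp add: parity_def)
  qed
  have W': "W = (p @ subst_word \<sigma> (take i u)) @ subst_word \<sigma> d @ (subst_word \<sigma> (drop j u) @ q)"
    using W u by (metis append.assoc subst_word_append)
  have "N + 2 \<le> length (subst_word \<sigma> d)"
  proof (rule length_even_word_if_letters_apart)
    show "letters_apart N (subst_word \<sigma> d)"
      using apart W' by (metis letters_apart_factor)
    show "subst_word \<sigma> d \<noteq> []"
      using \<open>d \<noteq> []\<close> \<sigma> by (simp add: subst_word_eq_Nil_iff)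
    show "\<forall>z. even (count_list (subst_word \<sigma> d) z)"
      by (simp add: count_list_subst_word even dvd_sum)
  qed
  moreover have "length (subst_word \<sigma> d) \<le> length d"
  proof (rule length_subst_word_le_if_letters_repeated[OF pairs_distinct W'[symmetric]])
    show "\<forall>x\<in>set d. 2 \<le> count_list d x"
    proof
      fix x
      assume "x \<in> set d"
      then have "count_list d x \<noteq> 0"
        by (simp add: count_list_0_iff)
      with even[of x] show "2 \<le> count_list d x"
        by presburger
    qed
  qed
  ultimately show False
    using \<open>length d \<le> N\<close> by simp
qed

lemma letters_apart_append:
  assumes "letters_apart N xs" "letters_apart N ys" "set xs \<inter> set ys = {}"
  shows "letters_apart N (xs @ ys)"
  unfolding letters_apart_def
proof (intro allI impI)
  fix s t
  assume st: "s < t" "t < length (xs @ ys)" and eq: "(xs @ ys) ! s = (xs @ ys) ! t"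
  consider "t < length xs" | "length xs \<le> s" | "s < length xs" "length xs \<le> t"
    by linarith
  then show "s + N < t"
  proof cases
    case 1
    then show ?thesis
      using assms(1) st eq by (simp add: letters_apart_def nth_append)
  next
    case 2
    then have "s - length xs + N < t - length xs"
      using assms(2)[unfolded letters_apart_def, rule_format, of "s - length xs" "t - length xs"] st eq
      by (simp add: nth_append)
    then show ?thesis
      by linarith
  next
    case 3
    then have "xs ! s \<in> set xs" "ys ! (t - length xs) \<in> set ys"
      using st by simp_all
    moreover have "xs ! s = ys ! (t - length xs)"
      using 3 eq by (simp add: nth_append)
    ultimately show ?thesis
      using assms(3) by (metis disjoint_iff)
  qed
qed

lemma zip_tl_append:
  "xs \<noteq> [] \<Longrightarrow> ys \<noteq> [] \<Longrightarrow>
     zip (xs @ ys) (tl (xs @ ys)) = zip xs (tl xs) @ (last xs, hd ys) # zip ys (tl ys)"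
  by (induction xs rule: list_nonempty_induct) (auto simp: neq_Nil_conv)

lemma distinct_zip_tl_append:
  assumes "distinct (zip xs (tl xs))" "distinct (zip ys (tl ys))" "set xs \<inter> set ys = {}"
  shows "distinct (zip (xs @ ys) (tl (xs @ ys)))"
proof (cases "xs = [] \<or> ys = []")
  case False
  have "(last xs, hd ys) \<notin> set (zip xs (tl xs))"
    using False assms(3) by (auto dest!: set_zip_rightD dest: list.set_sel(2))
  moreover have "(last xs, hd ys) \<notin> set (zip ys (tl ys))"
    using False assms(3) last_in_set by (fastforce dest!: set_zip_leftD)
  moreover have "set (zip xs (tl xs)) \<inter> set (zip ys (tl ys)) = {}"
    using assms(3) by (auto dest!: set_zip_leftD)
  moreover have "xs \<noteq> []" "ys \<noteq> []"
    using False by simp_all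
  ultimately show ?thesis
    unfolding zip_tl_append[OF \<open>xs \<noteq> []\<close> \<open>ys \<noteq> []\<close>] using assms(1,2) by simp
qed (use assms in auto)

text \<open>\<open>block N b\<close> is \<open>x\<^sub>1 \<dots> x\<^sub>N y\<^sub>1 \<dots> y\<^sub>N x\<^sub>N \<dots> x\<^sub>1 y\<^sub>N \<dots> y\<^sub>1\<close> with
  \<open>x\<^sub>i = b + i - 1\<close> and \<open>y\<^sub>i = b + N + i - 1\<close>; its \<open>t\<close>-th letter is \<open>b + block_letter N t\<close>.\<close>

definition block_letter :: "nat \<Rightarrow> nat \<Rightarrow> nat" where
  "block_letter N t = (if t < 2*N then t else if t < 3*N then 3*N - 1 - t else 5*N - 1 - t)"

definition block :: "nat \<Rightarrow> nat \<Rightarrow> nat list" where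
  "block N b = [b..<b+N] @ [b+N..<b+2*N] @ rev [b..<b+N] @ rev [b+N..<b+2*N]"

lemma length_block [simp]: "length (block N b) = 4*N"
  by (simp add: block_def)

lemma nth_block: "t < 4*N \<Longrightarrow> block N b ! t = b + block_letter N t"
  unfolding block_def block_letter_def by (auto simp: nth_append rev_nth)

lemma set_block: "set (block N b) = {b..<b+2*N}"
  by (auto simp: block_def)

lemma even_count_block: "even (count_list (block N b) z)"
  by (auto simp: block_def)

lemma letters_apart_block: "letters_apart N (block N b)"
  unfolding letters_apart_def by (auto simp: nth_block block_letter_def split: if_splits)

lemma distinct_zip_tl_block:
  assumes "2 \<le> N"
  shows "distinct (zip (block N b) (tl (block N b)))"
  unfolding distinct_conv_nth
proof (intro allI impI)
  fix i j
  assume "i < length (zip (block N b) (tl (block N b)))" "j < length (zip (block N b) (tl (block N b)))" "i \<noteq> j"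
  then show "zip (block N b) (tl (block N b)) ! i \<noteq> zip (block N b) (tl (block N b)) ! j"
    using assms by (auto simp: nth_tl nth_block block_letter_def split: if_splits)
qed

lemma not_flip_prod_list_if_even:
  assumes "\<forall>z. even (count_list w z)"
  shows "\<not> flip (prod_list (map g w))"
proof -
  define E where "E = {z \<in> set w. flip (g z)}"
  have "finite E"
    by (simp add: E_def)
  have "filter (flip \<circ> g) w = filter (\<lambda>z. z \<in> E) w"
    by (rule filter_cong) (auto simp: E_def)
  then have "length (filter (flip \<circ> g) w) = (\<Sum>z\<in>E. count_list w z)"
    by (simp add: length_filter_mem_eq_sum_count[OF \<open>finite E\<close>])
  then show ?thesis
    using assms by (simp add: flip_prod_list dvd_sum)
qed

definition test_word :: "nat \<Rightarrow> nat list" where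
  "test_word N = block N 0 @ block N (2*N)"

text \<open>Both blocks evaluate to translations, which commute.\<close>

lemma satisfies_id_test_word:
  assumes "1 \<le> N"
  shows "satisfies_id TYPE(Dinf) (test_word N) (block N (2*N) @ block N 0)"
proof -
  have "length (block N b) \<noteq> 0" for b
    using assms by simp
  then have "block N b \<noteq> []" for b
    by blast
  moreover have "\<not> flip (prod_list (map g (block N b)))" for g :: "nat \<Rightarrow> aff" and b
    by (rule not_flip_prod_list_if_even) (simp add: even_count_block)
  ultimately show ?thesis
    unfolding satisfies_id_Dinf_iff test_word_def by (simp add: translations_commute)
qed

lemma letters_apart_test_word: "letters_apart N (test_word N)"
  unfolding test_word_def by (rule letters_apart_append) (auto simp: letters_apart_block set_block)

lemma distinct_zip_tl_test_word: "2 \<le> N \<Longrightarrow> distinct (zip (test_word N) (tl (test_word N)))"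
  unfolding test_word_def by (rule distinct_zip_tl_append) (auto simp: distinct_zip_tl_block set_block)

lemma identity_fixes_test_word:
  assumes "2 \<le> N" and "satisfies_id TYPE(Dinf) u v" "length u \<le> N"
    and "\<forall>x. \<sigma> x \<noteq> []" "p @ subst_word \<sigma> u @ q = test_word N"
  shows "v = u"
proof -
  have "isoterm TYPE(Dinf) u"
    using assms letters_apart_test_word distinct_zip_tl_test_word
    by (metis inj_prefix_parity_if_instance isoterm_Dinf_if_inj_prefix_parity)
  then show ?thesis
    using assms(2) by (simp add: isoterm_def)
qed

lemma not_finitely_based_Dinf: "\<not> finitely_based TYPE(Dinf)"
proof
  assume "finitely_based TYPE(Dinf)"
  then obtain \<Sigma> where "finite \<Sigma>" and sound: "\<forall>(u, v) \<in> \<Sigma>. satisfies_id TYPE(Dinf) u v"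
    and complete: "\<forall>u v. satisfies_id TYPE(Dinf) u v \<longrightarrow> derivable \<Sigma> u v"
    unfolding finitely_based_def by blast
  define N where "N = 2 + (\<Sum>(u, v)\<in>\<Sigma>. length u + length v)"
  have short: "length u \<le> N \<and> length v \<le> N" if "(u, v) \<in> \<Sigma>" for u v
    using member_le_sum[OF that, of "\<lambda>(u, v). length u + length v"] \<open>finite \<Sigma>\<close>
    by (simp add: N_def)
  have "2 \<le> N"
    by (simp add: N_def)
  have trivial: "p @ subst_word \<sigma> u @ q = test_word N \<longleftrightarrow> p @ subst_word \<sigma> v @ q = test_word N"
    if "(u, v) \<in> \<Sigma>" "\<forall>x. \<sigma> x \<noteq> []" for u v \<sigma> p q
  proof -
    have "satisfies_id TYPE(Dinf) u v" "satisfies_id TYPE(Dinf) v u"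
      using sound that(1) by (auto simp: satisfies_id_def)
    then show ?thesis
      using identity_fixes_test_word[OF \<open>2 \<le> N\<close>] short[OF that(1)] that(2) by metis
  qed
  have "derivable \<Sigma> (test_word N) (block N (2*N) @ block N 0)"
    using complete satisfies_id_test_word \<open>2 \<le> N\<close> by simp
  have "[] @ subst_word (\<lambda>x. [x]) (test_word N) @ [] = test_word N \<longleftrightarrow>
      [] @ subst_word (\<lambda>x. [x]) (block N (2*N) @ block N 0) @ [] = test_word N"
    by (rule derivable_fixes_word[OF _ \<open>derivable \<Sigma> _ _\<close>]) (simp_all add: trivial)
  then have "block N (2*N) @ block N 0 = test_word N"
    by simp
  moreover have "test_word N ! 0 \<noteq> (block N (2*N) @ block N 0) ! 0"
    by (simp add: N_def test_word_def nth_append nth_block block_letter_def)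
  ultimately show False
    by simp
qed

theorem mainTheorem5:
  shows "in_Com_malcev_Fin TYPE(Dinf)
     \<and> (\<forall>n \<ge> 1. isoterm TYPE(Dinf) (zimin n))
     \<and> \<not> finitely_based TYPE(Dinf)"
  using Dinf_in_Com_malcev_Fin isoterm_Dinf_zimin not_finitely_based_Dinf by blast

end
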